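(* Let $\langle A,f,g\rangle$ be a betweenness algebra and $a,b,c\in A$ with $0\notin\{a,b,c\}$ and $g(a,b)=1$. Then: (1) $|A|=2$ or $a\cdot b=0$; (2) $a$ and $b$ are atoms of $A$; (3) if $g(a,c)=1$, then $b=c$.
   Context: A PS-algebra is $\langle A,f,g\rangle$ where $A$ is a Boolean algebra with at least two elements (operations $+,\cdot,-,0,1$) and $f,g\colon A^2\to A$ satisfy: $f(x,y)=0$ whenever $x=0$ or $y=0$; $f$ is additive in each argument; $g(x,y)=1$ whenever $x=0$ or $y=0$; $g$ is co-additive in each argument ($g(x+x',y)=g(x,y)\cdot g(x',y)$, $g(x,y+y')=g(x,y)\cdot g(x,y')$). A betweenness algebra is a PS-algebra satisfying for all $x,y,z$: (ABT0) $x\leq f(x,x)$; (ABT1$_f$) $f(x,y)\leq f(y,x)$; (ABT1$_g$) $g(x,y)\leq g(y,x)$; (ABT2) $y\cdot f(x,z)\leq f(x\cdot f(x,y),z)$; (ABT3) $f(x,g(x,-y)\cdot y)\leq y$; (wMIA) if $x\neq0$ and $y\neq0$ then $g(x,y)\leq f(x,y)$. *)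

theory Defs
  imports Main
begin

text \<open>The Boolean algebra A is the carrier (UNIV) of a type of class boolean_algebra:
  + is sup, the product is inf, - is uminus, 0 is bot, 1 is top.\<close>

definition PS_algebra :: "('a::boolean_algebra \<Rightarrow> 'a \<Rightarrow> 'a) \<Rightarrow> ('a \<Rightarrow> 'a \<Rightarrow> 'a) \<Rightarrow> bool" where
  "PS_algebra f g \<longleftrightarrow>
     (bot::'a) \<noteq> top \<and>
     (\<forall>x y. (x = bot \<or> y = bot) \<longrightarrow> f x y = bot) \<and>
     (\<forall>x x' y. f (sup x x') y = sup (f x y) (f x' y)) \<and>
     (\<forall>x y y'. f x (sup y y') = sup (f x y) (f x y')) \<and>
     (\<forall>x y. (x = bot \<or> y = bot) \<longrightarrow> g x y = top) \<and>
     (\<forall>x x' y. g (sup x x') y = inf (g x y) (g x' y)) \<and>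
     (\<forall>x y y'. g x (sup y y') = inf (g x y) (g x y'))"

definition betweenness_algebra :: "('a::boolean_algebra \<Rightarrow> 'a \<Rightarrow> 'a) \<Rightarrow> ('a \<Rightarrow> 'a \<Rightarrow> 'a) \<Rightarrow> bool" where
  "betweenness_algebra f g \<longleftrightarrow>
     PS_algebra f g \<and>
     (\<forall>x. x \<le> f x x) \<and>
     (\<forall>x y. f x y \<le> f y x) \<and>
     (\<forall>x y. g x y \<le> g y x) \<and>
     (\<forall>x y z. inf y (f x z) \<le> f (inf x (f x y)) z) \<and>
     (\<forall>x y. f x (inf (g x (- y)) y) \<le> y) \<and>
     (\<forall>x y. x \<noteq> bot \<longrightarrow> y \<noteq> bot \<longrightarrow> g x y \<le> f x y)"

definition atom :: "'a::boolean_algebra \<Rightarrow> bool" where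
  "atom a \<longleftrightarrow> a \<noteq> bot \<and> (\<forall>x. x \<le> a \<longrightarrow> x = bot \<or> x = a)"

end

theory Submission
  imports Defs
begin

text \<open>If \<open>g(a,b) = 1\<close> with \<open>a \<noteq> 0\<close>, then \<open>g(a,y) = 1\<close> for every \<open>y \<le> b\<close>; for \<open>y \<noteq> 0\<close>, wMIA
  turns this into \<open>f(a,y) = 1\<close>, while ABT3 applied to \<open>Y = y + -b\<close> (note \<open>g(a,-Y) = 1\<close>)
  gives \<open>f(a,Y) \<le> Y\<close>. Hence \<open>Y = 1\<close>, i.e. \<open>b \<le> y\<close>, so \<open>b\<close> is an atom, and by symmetry of \<open>g\<close>
  so is \<open>a\<close>. Since \<open>g(a,b+c) = g(a,b) \<cdot> g(a,c)\<close>, also \<open>b + c\<close> is an atom, forcing \<open>b = c\<close>.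
  Finally, if \<open>a \<cdot> b \<noteq> 0\<close> then the atoms coincide, so \<open>g(a,a) = 1\<close>. Then ABT3 gives
  \<open>a \<cdot> f(a,-a) = 0\<close>, and ABT2 turns this into \<open>-a \<cdot> f(a,a) = 0\<close>, where \<open>f(a,a) = 1\<close> by wMIA.
  Thus \<open>a = 1\<close> is an atom and the algebra has two elements.\<close>

lemma atom_top_imp_card_UNIV:
  assumes "atom (top :: 'a::boolean_algebra)"
  shows "card (UNIV :: 'a set) = 2"
proof -
  have UNIV_eq: "UNIV = {bot, top :: 'a}"
    using assms unfolding atom_def by auto
  have "(bot :: 'a) \<noteq> top"
    using assms unfolding atom_def by auto
  then show ?thesis
    unfolding UNIV_eq by simp
qed

lemma atoms_eq_if_inf_nonzero:
  assumes "atom a" and "atom b" and "inf a b \<noteq> bot"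
  shows "a = b"
proof -
  have "inf a b = a"
    using assms(1,3) inf_le1[of a b] unfolding atom_def by blast
  moreover have "inf a b = b"
    using assms(2,3) inf_le2[of a b] unfolding atom_def by blast
  ultimately show ?thesis by simp
qed

context
  fixes f g :: "'a::boolean_algebra \<Rightarrow> 'a \<Rightarrow> 'a"
  assumes betw: "betweenness_algebra f g"
begin

lemma f_bot_left: "f bot y = bot"
  using betw unfolding betweenness_algebra_def PS_algebra_def by simp

lemma f_sup_right: "f x (sup y y') = sup (f x y) (f x y')"
  using betw unfolding betweenness_algebra_def PS_algebra_def by simp

lemma g_sup_right: "g x (sup y y') = inf (g x y) (g x y')"
  using betw unfolding betweenness_algebra_def PS_algebra_def by simp

lemma g_le_swap: "g x y \<le> g y x"
  using betw unfolding betweenness_algebra_def by simp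

lemma ABT2: "inf y (f x z) \<le> f (inf x (f x y)) z"
  using betw unfolding betweenness_algebra_def by simp

lemma ABT3: "f x (inf (g x (- y)) y) \<le> y"
  using betw unfolding betweenness_algebra_def by simp

lemma wMIA: "x \<noteq> bot \<Longrightarrow> y \<noteq> bot \<Longrightarrow> g x y \<le> f x y"
  using betw unfolding betweenness_algebra_def by simp

lemma f_mono_right: "y \<le> y' \<Longrightarrow> f x y \<le> f x y'"
  using f_sup_right[of x y y'] by (simp add: le_iff_sup sup_absorb2)

lemma g_antimono_right: "y \<le> y' \<Longrightarrow> g x y' \<le> g x y"
  using g_sup_right[of x y y'] by (simp add: le_iff_inf inf_commute sup_absorb2)

lemma g_top_sym: "g x y = top \<Longrightarrow> g y x = top"
  using g_le_swap[of x y] by (simp add: top_unique)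

lemma g_top_imp_atom:
  assumes "a \<noteq> bot" and "b \<noteq> bot" and gab: "g a b = top"
  shows "atom b"
  unfolding atom_def
proof (intro conjI allI impI)
  show "b \<noteq> bot" by fact
  fix y
  assume "y \<le> b"
  have g_top_below_b: "g a z = top" if "z \<le> b" for z
    using g_antimono_right[OF that, of a] gab by (simp add: top_unique)
  show "y = bot \<or> y = b"
  proof (cases "y = bot")
    case False
    define Y where "Y = sup y (- b)"
    have "g a (- Y) = top"
      by (rule g_top_below_b) (simp add: Y_def)
    then have "f a Y \<le> Y"
      using ABT3[of a Y] by simp
    moreover have "top \<le> f a y"
      using wMIA[OF \<open>a \<noteq> bot\<close> False] g_top_below_b[OF \<open>y \<le> b\<close>] by simp
    moreover have "f a y \<le> f a Y"
      by (rule f_mono_right) (simp add: Y_def)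
    ultimately have "Y = top"
      by (simp add: top_unique)
    then have "b \<le> y"
      by (simp add: Y_def sup_shunt)
    with \<open>y \<le> b\<close> show ?thesis by simp
  qed simp
qed

lemma g_top_right_unique:
  assumes "a \<noteq> bot" and "b \<noteq> bot" and "c \<noteq> bot"
    and "g a b = top" and "g a c = top"
  shows "b = c"
proof -
  have "g a (sup b c) = top"
    using assms(4,5) by (simp add: g_sup_right)
  then have "atom (sup b c)"
    using g_top_imp_atom[OF \<open>a \<noteq> bot\<close>] \<open>b \<noteq> bot\<close> by simp
  then have "b = sup b c" and "c = sup b c"
    using \<open>b \<noteq> bot\<close> \<open>c \<noteq> bot\<close> sup_ge1[of b c] sup_ge2[of c b]
    unfolding atom_def by blast+
  then show ?thesis by simp
qed

lemma g_self_top_imp_top: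
  assumes "a \<noteq> bot" and gaa: "g a a = top"
  shows "a = top"
proof -
  have "f a (- a) \<le> - a"
    using ABT3[of a "- a"] gaa by simp
  then have "inf a (f a (- a)) = bot"
    by (simp add: inf_shunt compl_le_swap1)
  moreover have "f a a = top"
    using wMIA[OF \<open>a \<noteq> bot\<close> \<open>a \<noteq> bot\<close>] gaa by (simp add: top_unique)
  ultimately have "- a = bot"
    using ABT2[of "- a" a a] by (simp add: f_bot_left bot_unique)
  then show ?thesis
    by (metis compl_bot_eq double_compl)
qed

end

theorem theorem29:
  fixes f g :: "'a::boolean_algebra \<Rightarrow> 'a \<Rightarrow> 'a" and a b c :: 'a
  assumes "betweenness_algebra f g"
    and "a \<noteq> bot" and "b \<noteq> bot" and "c \<noteq> bot"
    and "g a b = top"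
  shows "(card (UNIV :: 'a set) = 2 \<or> inf a b = bot)
    \<and> atom a \<and> atom b
    \<and> (g a c = top \<longrightarrow> b = c)"
proof -
  note betw = assms(1)
  have atom_b: "atom b"
    using g_top_imp_atom[OF betw assms(2,3,5)] .
  have atom_a: "atom a"
    using g_top_imp_atom[OF betw assms(3,2) g_top_sym[OF betw assms(5)]] .
  have "card (UNIV :: 'a set) = 2" if "inf a b \<noteq> bot"
  proof -
    have "a = b"
      using atoms_eq_if_inf_nonzero[OF atom_a atom_b that] .
    then have "a = top"
      using g_self_top_imp_top[OF betw assms(2)] assms(5) by simp
    then show ?thesis
      using atom_a atom_top_imp_card_UNIV by simp
  qed
  moreover have "g a c = top \<longrightarrow> b = c"
    using g_top_right_unique[OF betw assms(2,3,4,5)] by blast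
  ultimately show ?thesis
    using atom_a atom_b by blast
qed

end
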